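(* Let $M$ be a finitely generated $\mathbb{Z}[\sigma]$-submodule of $\mathbb{Q}[\sigma]$, and let $\tilde M$ be the union of all $\mathbb{Z}[\sigma]$-submodules $N$ of $\mathbb{Q}[\sigma]$ with $M\subseteq N$ and $N/M$ finite. Then $\tilde M$ is generated by one element as a $\mathbb{Z}[\sigma]$-module.
   Context: $\mathbb{Q}[\sigma]$ is the polynomial ring over $\mathbb{Q}$ in an indeterminate $\sigma$, viewed as a module over $\mathbb{Z}[\sigma]$ by multiplication. *)

theory Defs
  imports "HOL-Computational_Algebra.Polynomial"
begin

text \<open>Q[sigma] is rat poly; Z[sigma] is the image of int poly in it.\<close>
definition intpolys :: "rat poly set" where
  "intpolys = range (map_poly rat_of_int)"

definition zsubmodule :: "rat poly set \<Rightarrow> bool" where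
  "zsubmodule N \<longleftrightarrow> 0 \<in> N \<and> (\<forall>x\<in>N. \<forall>y\<in>N. x + y \<in> N)
      \<and> (\<forall>a\<in>intpolys. \<forall>x\<in>N. a * x \<in> N)"

definition zspan :: "rat poly set \<Rightarrow> rat poly set" where
  "zspan S = {x. \<exists>f. (\<forall>s\<in>S. f s \<in> intpolys) \<and> x = (\<Sum>s\<in>S. f s * s)}"

definition zfin_gen :: "rat poly set \<Rightarrow> bool" where
  "zfin_gen M \<longleftrightarrow> (\<exists>S. finite S \<and> M = zspan S)"

definition finite_quot :: "rat poly set \<Rightarrow> rat poly set \<Rightarrow> bool" where
  "finite_quot N M \<longleftrightarrow> finite ((\<lambda>x. (\<lambda>m. x + m) ` M) ` N)"

definition saturation :: "rat poly set \<Rightarrow> rat poly set" where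
  "saturation M = \<Union>{N. zsubmodule N \<and> M \<subseteq> N \<and> finite_quot N M}"

end

theory Submission
  imports Defs "HOL-Computational_Algebra.Polynomial_Factorial" "HOL-Computational_Algebra.Field_as_Ring"
begin

(*
  Write M as the span of a finite set S and let G be a gcd of S in Q[sigma]. Rescaling G by a
  rational constant gives g with s = u_s g for all s in S, where the integer polynomials u_s
  have no common prime factor in their coefficients and generate an ideal of Z[sigma] that
  contains a positive integer n. Such an ideal has finite index in Z[sigma] (induction on n,
  since Z[sigma]/(f, p) is finite whenever f is nonzero mod p), and it lies in the conductor
  {y. y g : M}; hence Z[sigma] g / M is finite and Z[sigma] g is contained in the saturation.
  Conversely, for x in the saturation a pigeonhole argument in the finite quotient puts k x and
  (sigma^j - sigma^i) x into M, a subset of Z[sigma] g, for some k > 0 and i < j. The first gives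
  x = y g with y rational, and since sigma^j - sigma^i is monic the second forces y to be integral.
*)

abbreviation rat_poly :: "int poly \<Rightarrow> rat poly" where
  "rat_poly \<equiv> map_poly rat_of_int"

lemma smult_sum_right: "smult c (\<Sum>s\<in>S. f s) = (\<Sum>s\<in>S. smult c (f s))"
  by (induction S rule: infinite_finite_induct) (simp_all add: smult_add_right)

lemma rat_poly_add: "rat_poly (p + q) = rat_poly p + rat_poly q"
  by (rule poly_eqI) (simp add: coeff_map_poly)

lemma rat_poly_diff: "rat_poly (p - q) = rat_poly p - rat_poly q"
  by (rule poly_eqI) (simp add: coeff_map_poly)

lemma rat_poly_mult: "rat_poly (p * q) = rat_poly p * rat_poly q"
  by (rule poly_eqI) (simp add: coeff_map_poly coeff_mult of_int_sum)

lemma rat_poly_smult: "rat_poly (smult c p) = smult (of_int c) (rat_poly p)"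
  by (rule poly_eqI) (simp add: coeff_map_poly)

lemma rat_poly_const: "rat_poly [:c:] = [:of_int c:]"
  by (rule poly_eqI) (simp add: coeff_map_poly coeff_pCons split: nat.splits)

lemma rat_poly_sum: "rat_poly (\<Sum>s\<in>S. f s) = (\<Sum>s\<in>S. rat_poly (f s))"
  by (induction S rule: infinite_finite_induct) (simp_all add: rat_poly_add)

lemma rat_poly_inject: "rat_poly p = rat_poly q \<longleftrightarrow> p = q"
  by (auto simp: poly_eq_iff coeff_map_poly)

lemma degree_rat_poly [simp]: "degree (rat_poly p) = degree p"
  by (simp add: degree_map_poly)

lemma rat_poly_in_intpolys [simp]: "rat_poly p \<in> intpolys"
  by (simp add: intpolys_def)

lemma intpolysE:
  assumes "x \<in> intpolys"
  obtains p where "x = rat_poly p"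
  using assms by (auto simp: intpolys_def)

lemma rat_poly_map_floor: "x \<in> intpolys \<Longrightarrow> rat_poly (map_poly floor x) = x"
  by (intro poly_eqI) (auto simp: coeff_map_poly elim!: intpolysE)

lemma intpolys_iff_coeff: "x \<in> intpolys \<longleftrightarrow> (\<forall>k. coeff x k \<in> \<int>)"
proof
  assume "\<forall>k. coeff x k \<in> \<int>"
  then have "x = rat_poly (map_poly floor x)"
    by (intro poly_eqI) (auto simp: coeff_map_poly elim!: Ints_cases)
  then show "x \<in> intpolys"
    by (metis rat_poly_in_intpolys)
qed (auto simp: coeff_map_poly elim!: intpolysE)

lemma intpolys_zero [simp]: "0 \<in> intpolys"
  by (metis map_poly_0 rat_poly_in_intpolys)

lemma intpolys_one [simp]: "1 \<in> intpolys"
  by (metis map_poly_1' of_int_1 rat_poly_in_intpolys)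

lemma intpolys_add: "x \<in> intpolys \<Longrightarrow> y \<in> intpolys \<Longrightarrow> x + y \<in> intpolys"
  by (metis intpolysE rat_poly_add rat_poly_in_intpolys)

lemma intpolys_diff: "x \<in> intpolys \<Longrightarrow> y \<in> intpolys \<Longrightarrow> x - y \<in> intpolys"
  by (metis intpolysE rat_poly_diff rat_poly_in_intpolys)

lemma intpolys_mult: "x \<in> intpolys \<Longrightarrow> y \<in> intpolys \<Longrightarrow> x * y \<in> intpolys"
  by (metis intpolysE rat_poly_mult rat_poly_in_intpolys)

lemma intpolys_const [simp]: "[:of_int c:] \<in> intpolys"
  by (metis rat_poly_const rat_poly_in_intpolys)

lemma intpolys_monom [simp]: "monom (of_int c) n \<in> intpolys"
  by (metis map_poly_monom of_int_0 rat_poly_in_intpolys)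

lemma zsubmodule_zero: "zsubmodule N \<Longrightarrow> 0 \<in> N"
  by (simp add: zsubmodule_def)

lemma zsubmodule_add: "zsubmodule N \<Longrightarrow> x \<in> N \<Longrightarrow> y \<in> N \<Longrightarrow> x + y \<in> N"
  by (simp add: zsubmodule_def)

lemma zsubmodule_mult: "zsubmodule N \<Longrightarrow> a \<in> intpolys \<Longrightarrow> x \<in> N \<Longrightarrow> a * x \<in> N"
  by (simp add: zsubmodule_def)

lemma zsubmodule_diff:
  assumes "zsubmodule N" "x \<in> N" "y \<in> N"
  shows "x - y \<in> N"
proof -
  have "[:-1:] * y \<in> N"
    using zsubmodule_mult[OF assms(1) intpolys_const[of "-1"] assms(3)] by simp
  then show ?thesis
    using zsubmodule_add[OF assms(1,2), of "- y"] by simp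
qed

lemma zspan_single: "zspan {g} = {f * g | f. f \<in> intpolys}"
proof (intro set_eqI iffI)
  fix x assume "x \<in> zspan {g}"
  then show "x \<in> {f * g | f. f \<in> intpolys}"
    unfolding zspan_def by auto
next
  fix x assume "x \<in> {f * g | f. f \<in> intpolys}"
  then obtain f where "f \<in> intpolys" "x = f * g"
    by blast
  then show "x \<in> zspan {g}"
    unfolding zspan_def by (intro CollectI exI[of _ "\<lambda>_. f"]) simp
qed

lemma zsubmodule_zspan_single: "zsubmodule (zspan {g})"
  unfolding zsubmodule_def zspan_single
proof (intro conjI ballI)
  show "0 \<in> {f * g | f. f \<in> intpolys}"
    by (auto intro: exI[of _ 0])
next
  fix x y assume "x \<in> {f * g | f. f \<in> intpolys}" "y \<in> {f * g | f. f \<in> intpolys}"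
  then obtain f1 f2 where "f1 \<in> intpolys" "f2 \<in> intpolys" "x = f1 * g" "y = f2 * g"
    by blast
  then show "x + y \<in> {f * g | f. f \<in> intpolys}"
    by (auto intro!: exI[of _ "f1 + f2"] intpolys_add simp: distrib_right)
next
  fix a x assume "a \<in> intpolys" "x \<in> {f * g | f. f \<in> intpolys}"
  then obtain f where "f \<in> intpolys" "x = f * g"
    by blast
  with \<open>a \<in> intpolys\<close> show "a * x \<in> {f * g | f. f \<in> intpolys}"
    by (auto intro!: exI[of _ "a * f"] intpolys_mult simp: mult.assoc)
qed

lemma zsubmodule_coset_eq:
  assumes "zsubmodule M" "x - r \<in> M"
  shows "(\<lambda>m. x + m) ` M = (\<lambda>m. r + m) ` M"
proof (intro set_eqI iffI)
  fix z assume "z \<in> (\<lambda>m. x + m) ` M"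
  then obtain m where "m \<in> M" "z = x + m" by auto
  then show "z \<in> (\<lambda>m. r + m) ` M"
    using zsubmodule_add[OF assms(1) assms(2)] by (intro image_eqI[of _ _ "x - r + m"]) auto
next
  fix z assume "z \<in> (\<lambda>m. r + m) ` M"
  then obtain m where "m \<in> M" "z = r + m" by auto
  then show "z \<in> (\<lambda>m. x + m) ` M"
    using zsubmodule_diff[OF assms(1) _ assms(2)] by (intro image_eqI[of _ _ "m - (x - r)"]) auto
qed

lemma finite_quotI:
  assumes "zsubmodule M" "finite R" "\<And>x. x \<in> N \<Longrightarrow> \<exists>r\<in>R. x - r \<in> M"
  shows "finite_quot N M"
proof -
  have "(\<lambda>x. (\<lambda>m. x + m) ` M) ` N \<subseteq> (\<lambda>r. (\<lambda>m. r + m) ` M) ` R"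
  proof (rule image_subsetI)
    fix x assume "x \<in> N"
    then obtain r where "r \<in> R" "x - r \<in> M"
      using assms(3) by blast
    then show "(\<lambda>m. x + m) ` M \<in> (\<lambda>r. (\<lambda>m. r + m) ` M) ` R"
      using zsubmodule_coset_eq[OF assms(1)] by blast
  qed
  then show ?thesis
    unfolding finite_quot_def using assms(2) by (rule finite_subset[OF _ finite_imageI])
qed

lemma finite_quot_pigeonhole:
  fixes f :: "nat \<Rightarrow> rat poly"
  assumes "zsubmodule M" "finite_quot N M" "\<And>j. f j \<in> N"
  obtains i j where "i < j" "f j - f i \<in> M"
proof -
  define coset where "coset j = (\<lambda>m. f j + m) ` M" for j
  have "range coset \<subseteq> (\<lambda>x. (\<lambda>m. x + m) ` M) ` N"
    using assms(3) by (auto simp: coset_def)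
  then have "finite (range coset)"
    using assms(2) finite_subset unfolding finite_quot_def by blast
  then have "\<not> inj coset"
    using finite_imageD infinite_UNIV_nat by blast
  then obtain i j where "i < j" "coset i = coset j"
    unfolding inj_def by (metis linorder_neqE_nat)
  moreover have "f j \<in> coset i"
    using zsubmodule_zero[OF assms(1)] \<open>coset i = coset j\<close>
    by (auto simp: coset_def intro: image_eqI[of _ _ 0])
  then obtain m where "m \<in> M" "f j = f i + m"
    by (auto simp: coset_def)
  ultimately show thesis
    using that by simp
qed

lemma saturation_pigeonhole:
  fixes a :: "nat \<Rightarrow> rat poly"
  assumes "zsubmodule M" "x \<in> saturation M" "\<And>j. a j \<in> intpolys"
  obtains i j where "i < j" "(a j - a i) * x \<in> M"
proof -
  obtain N where N: "zsubmodule N" "finite_quot N M" "x \<in> N"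
    using assms(2) unfolding saturation_def by blast
  obtain i j where "i < j" "a j * x - a i * x \<in> M"
    using finite_quot_pigeonhole[OF assms(1) N(2), of "\<lambda>j. a j * x"]
      zsubmodule_mult[OF N(1) assms(3) N(3)] by blast
  then show thesis
    by (intro that) (simp_all add: left_diff_distrib)
qed

lemma monic_division:
  fixes f g :: "'a::comm_ring_1 poly"
  assumes "lead_coeff g = 1"
  obtains q r where "f = g * q + r" "r = 0 \<or> degree r < degree g"
proof -
  obtain q r where qr: "pseudo_divmod f g = (q, r)"
    by fastforce
  have "g \<noteq> 0"
    using assms by auto
  from pseudo_divmod[OF this qr] assms show thesis
    by (intro that[of q r]) simp_all
qed

lemma intpolys_monic_cancel:
  assumes "lead_coeff P = 1" "P \<in> intpolys" "P * y \<in> intpolys"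
  shows "y \<in> intpolys"
proof -
  obtain P0 where P0: "P = rat_poly P0"
    using assms(2) by (rule intpolysE)
  obtain Z where Z: "P * y = rat_poly Z"
    using assms(3) by (rule intpolysE)
  have "lead_coeff P0 = 1"
    using assms(1) by (simp add: P0 coeff_map_poly)
  then obtain q r where qr: "Z = P0 * q + r" "r = 0 \<or> degree r < degree P0"
    by (rule monic_division)
  have r: "rat_poly r = P * (y - rat_poly q)"
    using Z by (simp add: qr rat_poly_add rat_poly_mult P0 algebra_simps)
  have "y = rat_poly q"
  proof (rule ccontr)
    assume "y \<noteq> rat_poly q"
    moreover have "P \<noteq> 0"
      using assms(1) by auto
    ultimately have "degree P \<le> degree (rat_poly r)" "rat_poly r \<noteq> 0"
      by (auto simp: r degree_mult_eq)
    then show False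
      using qr(2) by (auto simp: P0)
  qed
  then show ?thesis
    by simp
qed

lemma lead_coeff_monom_diff:
  assumes "i < j"
  shows "lead_coeff (monom (1::'a::comm_ring_1) j - monom 1 i) = 1"
proof -
  have "degree (monom (1::'a) j - monom 1 i) \<le> j"
    using assms by (intro degree_diff_le) (auto intro: degree_monom_le order_trans[OF degree_monom_le])
  moreover have "coeff (monom (1::'a) j - monom 1 i) j = 1"
    using assms by (simp add: coeff_monom)
  ultimately show ?thesis
    by (metis le_antisym le_degree one_neq_zero)
qed

lemma saturation_int_multiple:
  assumes "zsubmodule M" "x \<in> saturation M"
  obtains k :: nat where "k > 0" "smult (of_nat k) x \<in> M"
proof -
  have "[:of_nat j:] \<in> intpolys" for j :: nat
    using intpolys_const[of "int j"] by simp
  then obtain i j where "i < j" "([:of_nat j:] - [:of_nat i:]) * x \<in> M"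
    using saturation_pigeonhole[OF assms, of "\<lambda>j. [:of_nat j:]"] by blast
  then show thesis
    by (intro that[of "j - i"]) (simp_all add: of_nat_diff)
qed

lemma saturation_monic_multiple:
  assumes "zsubmodule M" "x \<in> saturation M"
  obtains P where "lead_coeff P = 1" "P \<in> intpolys" "P * x \<in> M"
proof -
  obtain i j where "i < j" "(monom 1 j - monom 1 i) * x \<in> M"
    using saturation_pigeonhole[OF assms, of "monom 1"] intpolys_monom[of 1] by auto
  moreover have "monom 1 j - monom 1 i \<in> intpolys"
    using intpolys_monom[of 1] by (simp add: intpolys_diff)
  ultimately show thesis
    using lead_coeff_monom_diff that by blast
qed

lemma saturation_subset_zspan_single:
  assumes M: "zsubmodule M" "M \<subseteq> zspan {g}"
  shows "saturation M \<subseteq> zspan {g}"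
proof
  fix x assume x: "x \<in> saturation M"
  obtain k :: nat where "k > 0" "smult (of_nat k) x \<in> M"
    using saturation_int_multiple[OF M(1) x] .
  then obtain y1 where y1: "smult (of_nat k) x = y1 * g"
    using M(2) unfolding zspan_single by blast
  obtain P where P: "lead_coeff P = 1" "P \<in> intpolys" "P * x \<in> M"
    using saturation_monic_multiple[OF M(1) x] .
  then obtain y2 where y2: "P * x = y2 * g" "y2 \<in> intpolys"
    using M(2) unfolding zspan_single by blast
  show "x \<in> zspan {g}"
  proof (cases "g = 0")
    case True
    then show ?thesis
      using y1 \<open>k > 0\<close> zsubmodule_zero[OF zsubmodule_zspan_single] by simp
  next
    case False
    define y where "y = smult (1 / of_nat k) y1"
    have xy: "x = y * g"
      using \<open>k > 0\<close> arg_cong[OF y1, of "smult (1 / of_nat k)"] by (simp add: y_def)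
    then have "P * y = y2"
      using y2(1) False by (simp add: mult.assoc)
    then have "y \<in> intpolys"
      using P y2(2) intpolys_monic_cancel by blast
    then show ?thesis
      unfolding zspan_single using xy by blast
  qed
qed

definition is_ideal :: "'a::comm_ring_1 set \<Rightarrow> bool" where
  "is_ideal I \<longleftrightarrow> 0 \<in> I \<and> (\<forall>x\<in>I. \<forall>y\<in>I. x + y \<in> I) \<and> (\<forall>a. \<forall>x\<in>I. a * x \<in> I)"

lemma is_ideal_mult: "is_ideal I \<Longrightarrow> x \<in> I \<Longrightarrow> a * x \<in> I"
  by (simp add: is_ideal_def)

lemma is_ideal_sum:
  "is_ideal I \<Longrightarrow> (\<And>s. s \<in> S \<Longrightarrow> f s \<in> I) \<Longrightarrow> (\<Sum>s\<in>S. f s) \<in> I"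
  unfolding is_ideal_def by (induction S rule: infinite_finite_induct) auto

definition finite_index :: "'a::ab_group_add set \<Rightarrow> bool" where
  "finite_index I \<longleftrightarrow> (\<exists>R. finite R \<and> (\<forall>x. \<exists>r\<in>R. x - r \<in> I))"

lemma finite_index_mono: "finite_index I \<Longrightarrow> I \<subseteq> J \<Longrightarrow> finite_index J"
  unfolding finite_index_def by (meson subsetD)

lemma finite_index_from_ideal_quotient:
  fixes I :: "'a::comm_ring_1 set"
  assumes I: "is_ideal I"
    and sum: "finite_index {i + c * a | i a. i \<in> I}"
    and quot: "finite_index {x. c * x \<in> I}"
  shows "finite_index I"
proof -
  obtain R1 where R1: "finite R1" "\<And>x. \<exists>r\<in>R1. x - r \<in> {i + c * a | i a. i \<in> I}"
    using sum unfolding finite_index_def by blast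
  obtain R2 where R2: "finite R2" "\<And>x. \<exists>r\<in>R2. x - r \<in> {x. c * x \<in> I}"
    using quot unfolding finite_index_def by blast
  define R where "R = (\<lambda>(r1, r2). r1 + c * r2) ` (R1 \<times> R2)"
  have "\<exists>r\<in>R. x - r \<in> I" for x
  proof -
    obtain r1 i a where "r1 \<in> R1" "i \<in> I" "x - r1 = i + c * a"
      using R1(2) by blast
    obtain r2 where "r2 \<in> R2" "c * (a - r2) \<in> I"
      using R2(2) by blast
    have "x - (r1 + c * r2) = i + c * (a - r2)"
      using \<open>x - r1 = i + c * a\<close> by (simp add: algebra_simps)
    moreover have "\<dots> \<in> I"
      using I \<open>i \<in> I\<close> \<open>c * (a - r2) \<in> I\<close> unfolding is_ideal_def by blast
    moreover have "r1 + c * r2 \<in> R"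
      using \<open>r1 \<in> R1\<close> \<open>r2 \<in> R2\<close> unfolding R_def by force
    ultimately show ?thesis
      by (intro bexI[of _ "r1 + c * r2"]) simp_all
  qed
  moreover have "finite R"
    using R1(1) R2(1) by (simp add: R_def)
  ultimately show ?thesis
    unfolding finite_index_def by blast
qed

lemma finite_polys_bounded:
  fixes A :: "'a::zero set"
  assumes "finite A"
  shows "finite {r :: 'a poly. (\<forall>k\<ge>d. coeff r k = 0) \<and> (\<forall>k. coeff r k \<in> A)}"
proof (rule finite_subset)
  show "{r. (\<forall>k\<ge>d. coeff r k = 0) \<and> (\<forall>k. coeff r k \<in> A)}
      \<subseteq> Poly ` {xs. set xs \<subseteq> A \<and> length xs = d}"
  proof
    fix r assume r: "r \<in> {r. (\<forall>k\<ge>d. coeff r k = 0) \<and> (\<forall>k. coeff r k \<in> A)}"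
    then have "r = Poly (map (coeff r) [0..<d])"
      by (intro poly_eqI) (auto simp: nth_default_def not_less)
    moreover have "set (map (coeff r) [0..<d]) \<subseteq> A"
      using r by auto
    ultimately show "r \<in> Poly ` {xs. set xs \<subseteq> A \<and> length xs = d}"
      by force
  qed
  show "finite (Poly ` {xs. set xs \<subseteq> A \<and> length xs = d})"
    using assms by (intro finite_imageI finite_lists_length_eq)
qed

lemma monic_mod_prime:
  fixes f :: "int poly"
  assumes p: "prime p" and k: "\<not> p dvd coeff f k"
  obtains u F A where "lead_coeff F = 1" "F = smult u f + smult p A"
proof -
  \<comment> \<open>Reduce f mod p and use Bezout to make the leading coefficient of the residue 1.\<close>
  define F1 where "F1 = map_poly (\<lambda>c. c mod p) f"
  define A1 where "A1 = map_poly (\<lambda>c. c div p) f"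
  have f: "f = F1 + smult p A1"
    by (rule poly_eqI) (simp add: F1_def A1_def coeff_map_poly)
  have "F1 \<noteq> 0"
    using k by (auto simp: F1_def coeff_map_poly dvd_eq_mod_eq_0 poly_eq_iff)
  define d where "d = degree F1"
  define c where "c = lead_coeff F1"
  have "c \<noteq> 0"
    using \<open>F1 \<noteq> 0\<close> by (simp add: c_def)
  moreover have "c = coeff f d mod p"
    by (simp add: c_def d_def F1_def coeff_map_poly)
  ultimately have "\<not> p dvd c"
    by (metis dvd_eq_mod_eq_0 mod_mod_trivial)
  then have "coprime c p"
    using prime_imp_coprime[OF p] coprime_commute by blast
  then obtain u v where uv: "u * c + v * p = 1"
    by (metis bezout_int coprime_iff_gcd_eq_1)
  define F where "F = smult u F1 + monom (v * p) d"
  have "degree F \<le> d"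
    unfolding F_def d_def by (intro degree_add_le degree_smult_le degree_monom_le)
  moreover have "coeff F d = 1"
    using uv by (simp add: F_def c_def d_def coeff_monom)
  ultimately have "lead_coeff F = 1"
    by (metis le_antisym le_degree one_neq_zero)
  moreover have "F = smult u f + smult p (monom v d - smult u A1)"
    unfolding F_def f by (simp add: smult_add_right smult_diff_right smult_monom algebra_simps)
  ultimately show thesis
    by (rule that)
qed

lemma finite_index_mod_prime:
  fixes f :: "int poly"
  assumes "prime p" "\<not> p dvd coeff f k"
  shows "finite_index {q * f + smult p a | q a. True}"
proof -
  obtain u F A where F: "lead_coeff F = 1" "F = smult u f + smult p A"
    using monic_mod_prime[OF assms] .
  define R where "R = {r :: int poly. (\<forall>k\<ge>degree F. coeff r k = 0) \<and> (\<forall>k. coeff r k \<in> {0..<p})}"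
  have "\<exists>r\<in>R. x - r \<in> {q * f + smult p a | q a. True}" for x
  proof -
    obtain q r where qr: "x = F * q + r" "r = 0 \<or> degree r < degree F"
      using F(1) by (rule monic_division)
    define r0 where "r0 = map_poly (\<lambda>c. c mod p) r"
    define B where "B = map_poly (\<lambda>c. c div p) r"
    have r: "r = r0 + smult p B"
      by (rule poly_eqI) (simp add: r0_def B_def coeff_map_poly)
    have "p > 0"
      using assms(1) prime_gt_0_int by blast
    moreover have "coeff r k = 0" if "k \<ge> degree F" for k
      using qr(2) that by (auto intro: coeff_eq_0)
    ultimately have "r0 \<in> R"
      by (auto simp: R_def r0_def coeff_map_poly)
    moreover have "x - r0 = smult u q * f + smult p (A * q + B)"
      unfolding qr(1) r F(2) by (simp add: algebra_simps smult_add_right)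
    ultimately show ?thesis
      by blast
  qed
  moreover have "finite R"
    unfolding R_def by (rule finite_polys_bounded) simp
  ultimately show ?thesis
    unfolding finite_index_def by blast
qed

lemma finite_index_int_poly_ideal:
  fixes I :: "int poly set"
  assumes "is_ideal I" "[:int n:] \<in> I" "n > 0"
    and "\<And>p. prime p \<Longrightarrow> \<exists>f\<in>I. \<exists>k. \<not> p dvd coeff f k"
  shows "finite_index I"
  using assms
proof (induction n arbitrary: I rule: less_induct)
  case (less n)
  show ?case
  proof (cases "n = 1")
    case True
    have "x \<in> I" for x
      using is_ideal_mult[OF less.prems(1,2), of x] True by simp
    then show ?thesis
      unfolding finite_index_def by (intro exI[of _ "{0}"]) simp
  next
    case False
    then obtain p m where p: "prime p" "n = p * m"
      using prime_factor_nat by (metis dvdE)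
    then have "m < n" "m > 0"
      using less.prems(3) prime_gt_1_nat[OF p(1)] by auto
    \<comment> \<open>The ideal quotient (I : p) contains n/p, and I + (p) contains (f, p) with f nonzero mod p.\<close>
    define J where "J = {x. [:int p:] * x \<in> I}"
    have "is_ideal J"
      using less.prems(1) unfolding is_ideal_def J_def
      by (auto simp: smult_add_right) (metis mult_smult_right)
    moreover have "I \<subseteq> J"
      using less.prems(1) unfolding is_ideal_def J_def by blast
    moreover have "[:int m:] \<in> J"
      using less.prems(2) p(2) by (simp add: J_def)
    ultimately have "finite_index J"
      using less.IH[OF \<open>m < n\<close>] \<open>m > 0\<close> less.prems(4) by blast
    moreover obtain f k where f: "f \<in> I" "\<not> int p dvd coeff f k"
      using less.prems(4)[of "int p"] p(1) by auto
    have "finite_index {i + [:int p:] * a | i a. i \<in> I}"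
    proof (rule finite_index_mono[OF finite_index_mod_prime])
      show "{q * f + smult (int p) a | q a. True} \<subseteq> {i + [:int p:] * a | i a. i \<in> I}"
        using less.prems(1) f(1) unfolding is_ideal_def by auto
    qed (use p(1) f(2) in auto)
    ultimately show ?thesis
      using finite_index_from_ideal_quotient less.prems(1) unfolding J_def by blast
  qed
qed

lemma common_denominator:
  fixes T :: "rat set"
  assumes "finite T"
  obtains e :: int where "e > 0" "\<And>t. t \<in> T \<Longrightarrow> of_int e * t \<in> \<int>"
  using assms
proof (induction T arbitrary: thesis rule: finite_induct)
  case empty
  then show ?case
    by (metis empty_iff zero_less_one)
next
  case (insert t T)
  obtain e where e: "e > 0" "\<And>s. s \<in> T \<Longrightarrow> of_int e * s \<in> \<int>"
    using insert.IH by blast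
  obtain a b where ab: "quotient_of t = (a, b)"
    by fastforce
  then have "b > 0" "t = of_int a / of_int b"
    by (simp_all add: quotient_of_denom_pos quotient_of_div)
  then have "of_int (b * e) * t = of_int (a * e)"
    by simp
  moreover have "of_int (b * e) * s \<in> \<int>" if "s \<in> T" for s
    using e(2)[OF that] by (simp add: mult.assoc)
  ultimately show ?case
    using insert.prems e(1) \<open>b > 0\<close> by (metis Ints_of_int insertE mult_pos_pos)
qed

lemma common_denominator_poly:
  fixes P :: "rat poly set"
  assumes "finite P"
  obtains e :: int where "e > 0" "\<And>p. p \<in> P \<Longrightarrow> smult (of_int e) p \<in> intpolys"
proof -
  have "finite (\<Union>p\<in>P. range (coeff p))"
    using assms by (simp add: range_coeff)
  then obtain e :: int where "e > 0" "\<And>t. t \<in> (\<Union>p\<in>P. range (coeff p)) \<Longrightarrow> of_int e * t \<in> \<int>"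
    using common_denominator by blast
  then show thesis
    by (intro that[of e]) (auto simp: intpolys_iff_coeff)
qed

lemma Gcd_bezout_sum:
  fixes S :: "'a::euclidean_ring_gcd set"
  assumes "finite S"
  obtains a where "(\<Sum>s\<in>S. a s * s) = Gcd S"
  using assms
proof (induction S arbitrary: thesis rule: finite_induct)
  case empty
  then show ?case
    by simp
next
  case (insert x S)
  obtain a where a: "(\<Sum>s\<in>S. a s * s) = Gcd S"
    using insert.IH by blast
  define \<alpha> where "\<alpha> = fst (bezout_coefficients x (Gcd S))"
  define \<beta> where "\<beta> = snd (bezout_coefficients x (Gcd S))"
  have "(\<Sum>s\<in>insert x S. (if s = x then \<alpha> else \<beta> * a s) * s) = \<alpha> * x + \<beta> * (\<Sum>s\<in>S. a s * s)"
    using insert.hyps by (auto simp: sum_distrib_left mult.assoc intro!: sum.cong)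
  also have "\<dots> = Gcd (insert x S)"
    unfolding a \<alpha>_def \<beta>_def by (simp add: bezout_coefficients_fst_snd)
  finally show ?case
    by (rule insert.prems)
qed

lemma clear_denominators:
  fixes v a :: "'b \<Rightarrow> rat poly"
  assumes "finite S" "(\<Sum>s\<in>S. a s * v s) = 1"
  obtains e :: int and W A where "e > 0"
    "\<And>s. s \<in> S \<Longrightarrow> rat_poly (W s) = smult (of_int e) (v s)"
    "(\<Sum>s\<in>S. A s * W s) = [:e * e:]"
proof -
  obtain e :: int where e: "e > 0" "\<And>p. p \<in> v ` S \<union> a ` S \<Longrightarrow> smult (of_int e) p \<in> intpolys"
    using common_denominator_poly[of "v ` S \<union> a ` S"] assms(1) by blast
  define W where "W s = map_poly floor (smult (of_int e) (v s))" for s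
  define A where "A s = map_poly floor (smult (of_int e) (a s))" for s
  have W: "rat_poly (W s) = smult (of_int e) (v s)" if "s \<in> S" for s
    unfolding W_def using e(2) that by (simp add: rat_poly_map_floor)
  have A: "rat_poly (A s) = smult (of_int e) (a s)" if "s \<in> S" for s
    unfolding A_def using e(2) that by (simp add: rat_poly_map_floor)
  have "rat_poly (\<Sum>s\<in>S. A s * W s) = smult (of_int e * of_int e) (\<Sum>s\<in>S. a s * v s)"
    unfolding rat_poly_sum smult_sum_right by (intro sum.cong) (simp_all add: rat_poly_mult A W)
  also have "\<dots> = rat_poly [:e * e:]"
    by (simp add: assms(2) rat_poly_const)
  finally show thesis
    using e(1) W by (intro that) (simp_all add: rat_poly_inject)
qed

lemma remove_content:
  fixes W A :: "'b \<Rightarrow> int poly"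
  assumes "(\<Sum>s\<in>S. A s * W s) = [:m:]" "m > 0"
  obtains c :: int and U and n :: nat where "c > 0" "n > 0"
    "\<And>s. s \<in> S \<Longrightarrow> W s = smult c (U s)"
    "(\<Sum>s\<in>S. A s * U s) = [:int n:]"
    "\<And>p. prime p \<Longrightarrow> \<exists>s\<in>S. \<exists>k. \<not> p dvd coeff (U s) k"
proof -
  define c where "c = Gcd {coeff (W s) k | s k. s \<in> S}"
  have "c \<noteq> 0"
  proof
    assume "c = 0"
    then have "W s = 0" if "s \<in> S" for s
      using that by (intro poly_eqI) (auto simp: c_def)
    then show False
      using assms by simp
  qed
  moreover have "c \<ge> 0"
    by (simp add: c_def)
  ultimately have "c > 0"
    by simp
  define U where "U s = map_poly (\<lambda>z. z div c) (W s)" for s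
  have W: "W s = smult c (U s)" if "s \<in> S" for s
  proof (rule poly_eqI)
    fix k
    have "c dvd coeff (W s) k"
      unfolding c_def using that by (intro Gcd_dvd) auto
    then show "coeff (W s) k = coeff (smult c (U s)) k"
      by (simp add: U_def coeff_map_poly)
  qed
  define X where "X = (\<Sum>s\<in>S. A s * U s)"
  have cX: "smult c X = [:m:]"
    unfolding X_def smult_sum_right using assms(1) by (simp add: W cong: sum.cong)
  then have "degree X = 0"
    using \<open>c \<noteq> 0\<close> by (metis degree_pCons_0 degree_smult_eq)
  then have X: "X = [:coeff X 0:]"
    by (metis degree_0_id)
  then have "c * coeff X 0 = m"
    using cX by (metis coeff_pCons_0 coeff_smult)
  then have "coeff X 0 > 0"
    using \<open>c > 0\<close> \<open>m > 0\<close> by (metis zero_less_mult_pos)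
  moreover have "\<exists>s\<in>S. \<exists>k. \<not> p dvd coeff (U s) k" if "prime p" for p
  proof (rule ccontr)
    assume "\<not> ?thesis"
    then have "p * c dvd z" if "z \<in> {coeff (W s) k | s k. s \<in> S}" for z
      using that W by (auto simp: mult.commute mult_dvd_mono)
    then have "p * c dvd c"
      unfolding c_def by (intro Gcd_greatest) blast
    then have "p dvd 1"
      using \<open>c \<noteq> 0\<close> dvd_times_right_cancel_iff[of c p 1] by simp
    then show False
      using \<open>prime p\<close> not_prime_unit by blast
  qed
  ultimately show thesis
    using \<open>c > 0\<close> W X by (intro that[of c "nat (coeff X 0)" U]) (simp_all add: X_def)
qed

lemma common_factor_with_primitive_cofactors:
  fixes S :: "rat poly set"
  assumes "finite S" "\<not> S \<subseteq> {0}"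
  obtains g U and n :: nat where "\<And>s. s \<in> S \<Longrightarrow> s = rat_poly (U s) * g" "n > 0"
    "\<exists>A. (\<Sum>s\<in>S. A s * U s) = [:int n:]"
    "\<And>p. prime p \<Longrightarrow> \<exists>s\<in>S. \<exists>k. \<not> p dvd coeff (U s) k"
proof -
  define G where "G = Gcd S"
  have "G \<noteq> 0"
    using assms(2) by (simp add: G_def)
  obtain a where a: "(\<Sum>s\<in>S. a s * s) = G"
    using Gcd_bezout_sum[OF assms(1)] unfolding G_def by blast
  define v where "v s = s div G" for s
  have Gv: "s = G * v s" if "s \<in> S" for s
    using that by (simp add: v_def G_def Gcd_dvd)
  have "G * (\<Sum>s\<in>S. a s * v s) = (\<Sum>s\<in>S. a s * (G * v s))"
    by (simp add: sum_distrib_left ac_simps)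
  also have "\<dots> = G * 1"
    using a Gv by (metis (no_types, lifting) mult_1_right sum.cong)
  finally have "(\<Sum>s\<in>S. a s * v s) = 1"
    using \<open>G \<noteq> 0\<close> by simp
  then obtain e :: int and W A where e: "e > 0"
      and W: "\<And>s. s \<in> S \<Longrightarrow> rat_poly (W s) = smult (of_int e) (v s)"
      and AW: "(\<Sum>s\<in>S. A s * W s) = [:e * e:]"
    using clear_denominators[OF assms(1)] by blast
  have "e * e > 0"
    using e by simp
  obtain c :: int and n U where "c > 0" "n > 0" and WU: "\<And>s. s \<in> S \<Longrightarrow> W s = smult c (U s)"
      and "(\<Sum>s\<in>S. A s * U s) = [:int n:]"
      and "\<And>p. prime p \<Longrightarrow> \<exists>s\<in>S. \<exists>k. \<not> p dvd coeff (U s) k"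
    by (rule remove_content[OF AW \<open>e * e > 0\<close>]) (rule that)
  moreover have "s = rat_poly (U s) * smult (of_int c / of_int e) G" if "s \<in> S" for s
  proof -
    have eq: "smult (of_int e) (v s) = smult (of_int c) (rat_poly (U s))"
      using W[OF that] WU[OF that] by (simp add: rat_poly_smult)
    have "v s = smult (1 / of_int e) (smult (of_int e) (v s))"
      using e by simp
    also have "\<dots> = smult (of_int c / of_int e) (rat_poly (U s))"
      unfolding eq by simp
    finally show ?thesis
      using Gv[OF that] by (simp add: ac_simps mult_smult_right)
  qed
  ultimately show thesis
    using that by blast
qed

lemma zsubmodule_sum:
  "zsubmodule N \<Longrightarrow> (\<And>s. s \<in> S \<Longrightarrow> f s \<in> N) \<Longrightarrow> (\<Sum>s\<in>S. f s) \<in> N"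
  by (induction S rule: infinite_finite_induct) (auto simp: zsubmodule_zero zsubmodule_add)

lemma zspan_subset: "zsubmodule N \<Longrightarrow> S \<subseteq> N \<Longrightarrow> zspan S \<subseteq> N"
  unfolding zspan_def by (auto intro!: zsubmodule_sum zsubmodule_mult)

lemma subset_zspan:
  assumes "finite S"
  shows "S \<subseteq> zspan S"
proof
  fix s assume "s \<in> S"
  have "(\<Sum>t\<in>S. (if t = s then 1 else 0) * t) = (\<Sum>t\<in>S. if t = s then t else 0)"
    by (intro sum.cong) auto
  then have "s = (\<Sum>t\<in>S. (if t = s then 1 else 0) * t)"
    using assms \<open>s \<in> S\<close> by simp
  moreover have "(if t = s then 1 else 0) \<in> intpolys" for t
    by simp
  ultimately show "s \<in> zspan S"
    unfolding zspan_def by (intro CollectI exI[of _ "\<lambda>t. if t = s then 1 else 0"]) simp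
qed

lemma is_ideal_conductor:
  assumes "zsubmodule M"
  shows "is_ideal {y. rat_poly y * g \<in> M}"
  using assms unfolding is_ideal_def
  by (auto simp: zsubmodule_zero zsubmodule_add zsubmodule_mult rat_poly_add rat_poly_mult
      distrib_right mult.assoc)

lemma finite_quot_zspan_single:
  assumes M: "zsubmodule M" and I: "finite_index {y. rat_poly y * g \<in> M}"
  shows "finite_quot (zspan {g}) M"
proof -
  obtain R where R: "finite R" "\<And>y. \<exists>r\<in>R. rat_poly (y - r) * g \<in> M"
    using I unfolding finite_index_def by blast
  show ?thesis
  proof (rule finite_quotI[OF M finite_imageI[OF R(1)]])
    fix x assume "x \<in> zspan {g}"
    then obtain y where y: "x = rat_poly y * g"
      unfolding zspan_single by (auto elim: intpolysE)
    obtain r where "r \<in> R" "rat_poly (y - r) * g \<in> M"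
      using R(2) by blast
    then show "\<exists>r'\<in>(\<lambda>r. rat_poly r * g) ` R. x - r' \<in> M"
      by (auto simp: y rat_poly_diff left_diff_distrib)
  qed
qed

lemma zfin_gen_finite_quot_zspan_single:
  assumes M: "zsubmodule M" "zfin_gen M"
  obtains g where "M \<subseteq> zspan {g}" "finite_quot (zspan {g}) M"
proof -
  obtain S where S: "finite S" "M = zspan S"
    using M(2) unfolding zfin_gen_def by blast
  show thesis
  proof (cases "S \<subseteq> {0}")
    case True
    have "zsubmodule {0}"
      by (simp add: zsubmodule_def)
    then have "M = {0}"
      using True S(2) zspan_subset zsubmodule_zero[OF M(1)] by blast
    moreover have "zspan {0} = {0}"
      by (auto simp: zspan_single intro: exI[of _ 0])
    ultimately show thesis
      using finite_quotI[OF M(1), of "{0}"] by (intro that) auto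
  next
    case False
    obtain g U n where g: "\<And>s. s \<in> S \<Longrightarrow> s = rat_poly (U s) * g" and "n > 0"
      and n: "\<exists>A. (\<Sum>s\<in>S. A s * U s) = [:int n:]"
      and primitive: "\<And>p. prime p \<Longrightarrow> \<exists>s\<in>S. \<exists>k. \<not> p dvd coeff (U s) k"
      by (rule common_factor_with_primitive_cofactors[OF S(1) False]) (rule that)
    define I where "I = {y. rat_poly y * g \<in> M}"
    have I: "is_ideal I"
      unfolding I_def using M(1) by (rule is_ideal_conductor)
    have U: "U s \<in> I" if "s \<in> S" for s
      using g[OF that] subset_zspan[OF S(1)] that unfolding I_def S(2) by auto
    obtain A where "(\<Sum>s\<in>S. A s * U s) = [:int n:]"
      using n by blast
    moreover have "(\<Sum>s\<in>S. A s * U s) \<in> I"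
      using I U by (intro is_ideal_sum[OF I] is_ideal_mult)
    ultimately have "[:int n:] \<in> I"
      by simp
    then have "finite_index I"
      using finite_index_int_poly_ideal[OF I _ \<open>n > 0\<close>] primitive U by blast
    moreover have "s \<in> zspan {g}" if "s \<in> S" for s
      unfolding zspan_single using g[OF that] rat_poly_in_intpolys by blast
    then have "M \<subseteq> zspan {g}"
      unfolding S(2) by (intro zspan_subset[OF zsubmodule_zspan_single]) blast
    ultimately show thesis
      using finite_quot_zspan_single[OF M(1)] that unfolding I_def by blast
  qed
qed

theorem lemma7p6:
  fixes M :: "rat poly set"
  assumes "zsubmodule M" and "zfin_gen M"
  shows "\<exists>g. saturation M = zspan {g}"
proof -
  obtain g where g: "M \<subseteq> zspan {g}" "finite_quot (zspan {g}) M"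
    using zfin_gen_finite_quot_zspan_single[OF assms] .
  have "zspan {g} \<subseteq> saturation M"
    unfolding saturation_def using zsubmodule_zspan_single g by blast
  moreover have "saturation M \<subseteq> zspan {g}"
    using assms(1) g(1) by (rule saturation_subset_zspan_single)
  ultimately show ?thesis
    by blast
qed

end
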